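(* Let $\mathbb J=\mathbb N\times(\mathbb N\cup\{\infty\})$ ordered by $(j,k)\le(m,n)$ iff either ($j=m$ and $k\le n$) or ($n=\infty$ and $k\le m$), and let $X=(\mathbb J,\sigma(\mathbb J))$ carry the Scott topology. Then $X$ is a $d$-space, $Q(X)=Q_s(X)$, and $X$ is neither well-filtered nor $s$-well-filtered. In particular, a $d$-space need not be $s$-well-filtered.
   Context: A subset $U$ of a poset is Scott open if it is an upper set and for every directed $D$ with existing supremum, $\bigvee D\in U$ implies $D\cap U\neq\emptyset$. A $T_0$ space is a $d$-space if it is a dcpo in its specialization order and every open set is Scott open. $Q(X)$: nonempty compact saturated sets; $Q_s(X)$: nonempty strongly compact saturated sets, where $A$ is strongly compact if for every open $U\supseteq A$ there is finite $F$ with $A\subseteq\uparrow F\subseteq U$. A family is filtered if nonempty and any two members contain a third. $X$ is well-filtered (resp. $s$-well-filtered) if for every open $U$ and filtered $\mathcal K\subseteq Q(X)$ (resp. $\subseteq Q_s(X)$), $\bigcap\mathcal K\subseteq U$ implies $K\subseteq U$ for some $K\in\mathcal K$. *)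

theory Defs
  imports "HOL-Analysis.Analysis" "HOL-Library.Extended_Nat"
begin

definition directed_in :: "'a set \<Rightarrow> ('a \<Rightarrow> 'a \<Rightarrow> bool) \<Rightarrow> 'a set \<Rightarrow> bool" where
  "directed_in P le D \<longleftrightarrow> D \<subseteq> P \<and> D \<noteq> {} \<and> (\<forall>x\<in>D. \<forall>y\<in>D. \<exists>z\<in>D. le x z \<and> le y z)"

definition is_lub_in :: "'a set \<Rightarrow> ('a \<Rightarrow> 'a \<Rightarrow> bool) \<Rightarrow> 'a set \<Rightarrow> 'a \<Rightarrow> bool" where
  "is_lub_in P le D s \<longleftrightarrow> s \<in> P \<and> (\<forall>x\<in>D. le x s) \<and> (\<forall>u\<in>P. (\<forall>x\<in>D. le x u) \<longrightarrow> le s u)"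

definition scott_open :: "'a set \<Rightarrow> ('a \<Rightarrow> 'a \<Rightarrow> bool) \<Rightarrow> 'a set \<Rightarrow> bool" where
  "scott_open P le U \<longleftrightarrow> U \<subseteq> P \<and> (\<forall>x\<in>U. \<forall>y\<in>P. le x y \<longrightarrow> y \<in> U) \<and>
     (\<forall>D s. directed_in P le D \<and> is_lub_in P le D s \<and> s \<in> U \<longrightarrow> D \<inter> U \<noteq> {})"

definition dcpo_in :: "'a set \<Rightarrow> ('a \<Rightarrow> 'a \<Rightarrow> bool) \<Rightarrow> bool" where
  "dcpo_in P le \<longleftrightarrow> (\<forall>D. directed_in P le D \<longrightarrow> (\<exists>s. is_lub_in P le D s))"

definition scott_topology :: "'a set \<Rightarrow> ('a \<Rightarrow> 'a \<Rightarrow> bool) \<Rightarrow> 'a topology" where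
  "scott_topology P le = topology (scott_open P le)"

definition spec_le :: "'a topology \<Rightarrow> 'a \<Rightarrow> 'a \<Rightarrow> bool" where
  "spec_le X x y \<longleftrightarrow> x \<in> X closure_of {y}"

definition T0 :: "'a topology \<Rightarrow> bool" where
  "T0 X \<longleftrightarrow> (\<forall>x\<in>topspace X. \<forall>y\<in>topspace X. x \<noteq> y \<longrightarrow>
              (\<exists>U. openin X U \<and> \<not> (x \<in> U \<longleftrightarrow> y \<in> U)))"

definition d_space :: "'a topology \<Rightarrow> bool" where
  "d_space X \<longleftrightarrow> T0 X \<and> dcpo_in (topspace X) (spec_le X) \<and>
     (\<forall>U. openin X U \<longrightarrow> scott_open (topspace X) (spec_le X) U)"

definition saturated :: "'a topology \<Rightarrow> 'a set \<Rightarrow> bool" where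
  "saturated X A \<longleftrightarrow> A \<subseteq> topspace X \<and> A = \<Inter>{U. openin X U \<and> A \<subseteq> U}"

definition upclosure :: "'a topology \<Rightarrow> 'a set \<Rightarrow> 'a set" where
  "upclosure X F = {x \<in> topspace X. \<exists>f\<in>F. spec_le X f x}"

definition strongly_compact :: "'a topology \<Rightarrow> 'a set \<Rightarrow> bool" where
  "strongly_compact X A \<longleftrightarrow> A \<subseteq> topspace X \<and>
     (\<forall>U. openin X U \<and> A \<subseteq> U \<longrightarrow>
        (\<exists>F. finite F \<and> F \<subseteq> topspace X \<and> A \<subseteq> upclosure X F \<and> upclosure X F \<subseteq> U))"

definition Qset :: "'a topology \<Rightarrow> 'a set set" where
  "Qset X = {A. A \<noteq> {} \<and> compactin X A \<and> saturated X A}"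

definition Qs_set :: "'a topology \<Rightarrow> 'a set set" where
  "Qs_set X = {A. A \<noteq> {} \<and> strongly_compact X A \<and> saturated X A}"

definition filtered_family :: "'a set set \<Rightarrow> bool" where
  "filtered_family K \<longleftrightarrow> K \<noteq> {} \<and> (\<forall>A\<in>K. \<forall>B\<in>K. \<exists>C\<in>K. C \<subseteq> A \<inter> B)"

definition well_filtered :: "'a topology \<Rightarrow> bool" where
  "well_filtered X \<longleftrightarrow> (\<forall>U K. openin X U \<and> K \<subseteq> Qset X \<and> filtered_family K \<and> \<Inter>K \<subseteq> U
       \<longrightarrow> (\<exists>A\<in>K. A \<subseteq> U))"

definition s_well_filtered :: "'a topology \<Rightarrow> bool" where
  "s_well_filtered X \<longleftrightarrow> (\<forall>U K. openin X U \<and> K \<subseteq> Qs_set X \<and> filtered_family K \<and> \<Inter>K \<subseteq> U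
       \<longrightarrow> (\<exists>A\<in>K. A \<subseteq> U))"

definition Jle :: "nat \<times> enat \<Rightarrow> nat \<times> enat \<Rightarrow> bool" where
  "Jle p q \<longleftrightarrow> (case p of (j, k) \<Rightarrow> case q of (m, n) \<Rightarrow>
      (j = m \<and> k \<le> n) \<or> (n = \<infinity> \<and> k \<le> enat m))"

end

theory Submission imports Defs begin

text \<open>
  In \<open>\<bbbJ>\<close> the finite points \<open>(j, k)\<close> form disjoint columns, and the top \<open>(j, \<infinity>)\<close> of column \<open>j\<close>
  lies above its own column and above every \<open>(m, k)\<close> with \<open>k \<le> j\<close>. A directed set either contains
  a top, which is then its greatest element, or lies in one column, so \<open>\<bbbJ>\<close> is a dcpo and its
  Scott topology is a d-space. A compact set has finite points in only finitely many columns;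
  the tops it contains are covered by one finite point \<open>(q, g)\<close> in an open neighbourhood
  (which lies below all tops \<open>(p, \<infinity>)\<close> with \<open>p \<ge> g\<close>) together with finitely many remaining tops,
  so compact saturated sets are strongly compact. The sets \<open>K\<^sub>n = {(p, \<infinity>) | p \<ge> n}\<close> are of
  this kind and form a filtered family with empty intersection, which refutes
  s-well-filteredness and hence well-filteredness.
\<close>

lemma istopology_scott_open: "istopology (scott_open P le)"
  unfolding istopology_def
proof (intro conjI allI impI)
  fix S T assume S: "scott_open P le S" and T: "scott_open P le T"
  show "scott_open P le (S \<inter> T)"
    unfolding scott_open_def
  proof (intro conjI allI impI)
    show "S \<inter> T \<subseteq> P" "\<forall>x\<in>S \<inter> T. \<forall>y\<in>P. le x y \<longrightarrow> y \<in> S \<inter> T"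
      using S T by (auto simp: scott_open_def)
    fix D s assume Ds: "directed_in P le D \<and> is_lub_in P le D s \<and> s \<in> S \<inter> T"
    then obtain x y where "x \<in> D \<inter> S" "y \<in> D \<inter> T"
      using S T unfolding scott_open_def by blast
    moreover obtain z where "z \<in> D" "le x z" "le y z"
      using Ds calculation unfolding directed_in_def by blast
    moreover have "z \<in> P" using Ds \<open>z \<in> D\<close> unfolding directed_in_def by blast
    ultimately show "D \<inter> (S \<inter> T) \<noteq> {}" using S T unfolding scott_open_def by blast
  qed
next
  fix \<K> assume \<K>: "\<forall>A\<in>\<K>. scott_open P le A"
  show "scott_open P le (\<Union>\<K>)"
    unfolding scott_open_def
  proof (intro conjI allI impI)
    show "\<Union>\<K> \<subseteq> P" "\<forall>x\<in>\<Union>\<K>. \<forall>y\<in>P. le x y \<longrightarrow> y \<in> \<Union>\<K>"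
      using \<K> by (auto simp: scott_open_def)
    fix D s assume Ds: "directed_in P le D \<and> is_lub_in P le D s \<and> s \<in> \<Union>\<K>"
    then obtain A where "A \<in> \<K>" "s \<in> A" by blast
    then have "D \<inter> A \<noteq> {}" using \<K> Ds unfolding scott_open_def by blast
    then show "D \<inter> \<Union>\<K> \<noteq> {}" using \<open>A \<in> \<K>\<close> by blast
  qed
qed

lemma openin_scott_topology: "openin (scott_topology P le) = scott_open P le"
  unfolding scott_topology_def by (simp add: istopology_scott_open)

lemma topspace_scott_topology: "topspace (scott_topology P le) = P"
proof -
  have "scott_open P le P"
    unfolding scott_open_def directed_in_def by blast
  then show ?thesis
    unfolding topspace_def openin_scott_topology scott_open_def by blast
qed

lemma is_lub_in_greatest: "s \<in> D \<Longrightarrow> D \<subseteq> P \<Longrightarrow> \<forall>x\<in>D. le x s \<Longrightarrow> is_lub_in P le D s"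
  unfolding is_lub_in_def by blast

lemma directed_in_subset: "directed_in P le D \<Longrightarrow> D \<subseteq> P"
  unfolding directed_in_def by blast

lemma directed_in_cong:
  assumes "\<And>x y. x \<in> P \<Longrightarrow> y \<in> P \<Longrightarrow> le' x y \<longleftrightarrow> le x y"
  shows "directed_in P le' D \<longleftrightarrow> directed_in P le D"
proof -
  have "(\<forall>x\<in>D. \<forall>y\<in>D. \<exists>z\<in>D. le' x z \<and> le' y z) \<longleftrightarrow> (\<forall>x\<in>D. \<forall>y\<in>D. \<exists>z\<in>D. le x z \<and> le y z)"
    if "D \<subseteq> P" using assms that by (simp add: subset_iff)
  then show ?thesis unfolding directed_in_def by blast
qed

lemma is_lub_in_cong:
  assumes "\<And>x y. x \<in> P \<Longrightarrow> y \<in> P \<Longrightarrow> le' x y \<longleftrightarrow> le x y" "D \<subseteq> P"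
  shows "is_lub_in P le' D s \<longleftrightarrow> is_lub_in P le D s"
  unfolding is_lub_in_def using assms by (auto simp: subset_iff)

lemma scott_open_cong:
  assumes le: "\<And>x y. x \<in> P \<Longrightarrow> y \<in> P \<Longrightarrow> le' x y \<longleftrightarrow> le x y"
  shows "scott_open P le' U \<longleftrightarrow> scott_open P le U"
proof -
  have lub: "is_lub_in P le' D s \<longleftrightarrow> is_lub_in P le D s" if "directed_in P le D" for D s
    using is_lub_in_cong[of P le' le, OF le directed_in_subset[OF that]] .
  have up: "U \<subseteq> P \<Longrightarrow> (\<forall>x\<in>U. \<forall>y\<in>P. le' x y \<longrightarrow> y \<in> U) \<longleftrightarrow> (\<forall>x\<in>U. \<forall>y\<in>P. le x y \<longrightarrow> y \<in> U)"
    using le by (simp add: subset_iff)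
  show ?thesis
    unfolding scott_open_def by (simp add: directed_in_cong[of P le' le, OF le] lub up cong: conj_cong)
qed

lemma dcpo_in_cong:
  assumes le: "\<And>x y. x \<in> P \<Longrightarrow> y \<in> P \<Longrightarrow> le' x y \<longleftrightarrow> le x y"
  shows "dcpo_in P le' \<longleftrightarrow> dcpo_in P le"
proof -
  have "Ex (is_lub_in P le' D) \<longleftrightarrow> Ex (is_lub_in P le D)" if "directed_in P le D" for D
    using is_lub_in_cong[of P le' le, OF le directed_in_subset[OF that]] by blast
  then show ?thesis
    unfolding dcpo_in_def by (simp add: directed_in_cong[of P le' le, OF le])
qed

lemma openin_spec_le_upward:
  assumes "openin X U" "x \<in> U" "spec_le X x y"
  shows "y \<in> U"
proof -
  have "\<exists>z. z \<in> {y} \<and> z \<in> U"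
    using assms unfolding spec_le_def in_closure_of by blast
  then show ?thesis by simp
qed

lemma spec_le_refl: "x \<in> topspace X \<Longrightarrow> spec_le X x x"
  using closure_of_subset[of "{x}" X] unfolding spec_le_def by blast

lemma upclosure_subset_openin: "openin X U \<Longrightarrow> F \<subseteq> U \<Longrightarrow> upclosure X F \<subseteq> U"
  unfolding upclosure_def by (auto intro: openin_spec_le_upward)

lemma subset_upclosure: "F \<subseteq> topspace X \<Longrightarrow> F \<subseteq> upclosure X F"
  unfolding upclosure_def by (auto intro: spec_le_refl)

lemma strongly_compact_imp_compactin:
  assumes "strongly_compact X A"
  shows "compactin X A"
  unfolding compactin_def
proof (intro conjI allI impI)
  show "A \<subseteq> topspace X" using assms unfolding strongly_compact_def by blast
  fix \<U> assume \<U>: "(\<forall>U\<in>\<U>. openin X U) \<and> A \<subseteq> \<Union>\<U>"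
  then have "openin X (\<Union>\<U>)" by auto
  then obtain F
    where F: "finite F" "F \<subseteq> topspace X" "A \<subseteq> upclosure X F" "upclosure X F \<subseteq> \<Union>\<U>"
    using \<U> assms unfolding strongly_compact_def by meson
  then have "\<forall>f\<in>F. \<exists>V\<in>\<U>. f \<in> V"
    using subset_upclosure[OF F(2)] by blast
  then obtain V where V: "\<forall>f\<in>F. V f \<in> \<U> \<and> f \<in> V f"
    by (metis bchoice)
  have "A \<subseteq> \<Union>(V ` F)"
  proof
    fix x assume "x \<in> A"
    then obtain f where "f \<in> F" "spec_le X f x"
      using F(3) unfolding upclosure_def by blast
    moreover have "openin X (V f)" "f \<in> V f" using V \<U> \<open>f \<in> F\<close> by auto
    ultimately have "x \<in> V f" by (blast intro: openin_spec_le_upward)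
    then show "x \<in> \<Union>(V ` F)" using \<open>f \<in> F\<close> by blast
  qed
  then show "\<exists>\<F>. finite \<F> \<and> \<F> \<subseteq> \<U> \<and> A \<subseteq> \<Union>\<F>"
    using F(1) V by (intro exI[of _ "V ` F"]) auto
qed

lemma Qs_set_subset_Qset: "Qs_set X \<subseteq> Qset X"
  unfolding Qs_set_def Qset_def using strongly_compact_imp_compactin by blast

lemma well_filtered_imp_s_well_filtered: "well_filtered X \<Longrightarrow> s_well_filtered X"
  unfolding well_filtered_def s_well_filtered_def
  using Qs_set_subset_Qset[of X] by (meson subset_trans)

lemma s_well_filtered_Inter_nonempty:
  assumes "s_well_filtered X" "\<K> \<subseteq> Qs_set X" "filtered_family \<K>"
  shows "\<Inter>\<K> \<noteq> {}"
proof
  assume "\<Inter>\<K> = {}"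
  then obtain A where "A \<in> \<K>" "A \<subseteq> {}"
    using assms(1)[unfolded s_well_filtered_def, rule_format, of "{}" \<K>] assms(2,3) by auto
  then show False using assms(2) unfolding Qs_set_def by blast
qed

locale poset_on =
  fixes P :: "'a set" and le :: "'a \<Rightarrow> 'a \<Rightarrow> bool"
  assumes refl_le: "x \<in> P \<Longrightarrow> le x x"
    and trans_le: "x \<in> P \<Longrightarrow> y \<in> P \<Longrightarrow> z \<in> P \<Longrightarrow> le x y \<Longrightarrow> le y z \<Longrightarrow> le x z"
    and antisym_le: "x \<in> P \<Longrightarrow> y \<in> P \<Longrightarrow> le x y \<Longrightarrow> le y x \<Longrightarrow> x = y"
begin

lemma scott_open_not_below: "y \<in> P \<Longrightarrow> scott_open P le {x \<in> P. \<not> le x y}"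
  unfolding scott_open_def
proof (intro conjI allI impI ballI)
  fix x z assume "y \<in> P" "x \<in> {x \<in> P. \<not> le x y}" "z \<in> P" "le x z"
  then show "z \<in> {x \<in> P. \<not> le x y}" using trans_le by blast
next
  fix D s assume Ds: "directed_in P le D \<and> is_lub_in P le D s \<and> s \<in> {x \<in> P. \<not> le x y}"
    and "y \<in> P"
  show "D \<inter> {x \<in> P. \<not> le x y} \<noteq> {}"
  proof
    assume "D \<inter> {x \<in> P. \<not> le x y} = {}"
    then have "\<forall>x\<in>D. le x y" using directed_in_subset Ds by blast
    then show False using Ds \<open>y \<in> P\<close> unfolding is_lub_in_def by blast
  qed
qed blast

lemma spec_le_scott_topology:
  "spec_le (scott_topology P le) x y \<longleftrightarrow> x \<in> P \<and> y \<in> P \<and> le x y"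
proof
  assume spec: "spec_le (scott_topology P le) x y"
  have x: "x \<in> P"
    using spec unfolding spec_le_def in_closure_of topspace_scott_topology by blast
  have y: "y \<in> P"
    using openin_spec_le_upward[OF openin_topspace _ spec] x
    by (simp add: topspace_scott_topology)
  have "le x y"
  proof (rule ccontr)
    assume "\<not> le x y"
    moreover have "openin (scott_topology P le) {x \<in> P. \<not> le x y}"
      by (simp add: openin_scott_topology scott_open_not_below[OF y])
    ultimately have "y \<in> {x \<in> P. \<not> le x y}"
      using openin_spec_le_upward[OF _ _ spec] x by blast
    then show False using refl_le[OF y] by blast
  qed
  with x y show "x \<in> P \<and> y \<in> P \<and> le x y" by blast
next
  assume xy: "x \<in> P \<and> y \<in> P \<and> le x y"
  have "y \<in> U" if "scott_open P le U" "x \<in> U" for U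
    using that xy unfolding scott_open_def by blast
  then show "spec_le (scott_topology P le) x y"
    unfolding spec_le_def in_closure_of topspace_scott_topology openin_scott_topology
    using xy by blast
qed

lemma T0_scott_topology: "T0 (scott_topology P le)"
  unfolding T0_def topspace_scott_topology
proof (intro ballI impI)
  have separate: "\<exists>U. openin (scott_topology P le) U \<and> \<not> (x \<in> U \<longleftrightarrow> y \<in> U)"
    if "x \<in> P" "y \<in> P" "\<not> le x y" for x y
  proof -
    have "openin (scott_topology P le) {z \<in> P. \<not> le z y}"
      by (simp add: openin_scott_topology scott_open_not_below[OF \<open>y \<in> P\<close>])
    moreover have "x \<in> {z \<in> P. \<not> le z y}" "y \<notin> {z \<in> P. \<not> le z y}"
      using that refl_le by auto
    ultimately show ?thesis by blast
  qed
  fix x y assume "x \<in> P" "y \<in> P" "x \<noteq> y"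
  then have "\<not> le x y \<or> \<not> le y x" using antisym_le by blast
  then show "\<exists>U. openin (scott_topology P le) U \<and> \<not> (x \<in> U \<longleftrightarrow> y \<in> U)"
    using separate[of x y] separate[of y x] \<open>x \<in> P\<close> \<open>y \<in> P\<close> by blast
qed

theorem d_space_scott_topology:
  assumes "dcpo_in P le"
  shows "d_space (scott_topology P le)"
proof -
  let ?le' = "spec_le (scott_topology P le)"
  have spec: "?le' x y \<longleftrightarrow> le x y" if "x \<in> P" "y \<in> P" for x y
    using that spec_le_scott_topology by blast
  have "dcpo_in P ?le'"
    using assms dcpo_in_cong[of P ?le' le, OF spec] by blast
  moreover have "scott_open P ?le' U" if "openin (scott_topology P le) U" for U
    using that scott_open_cong[of P ?le' le, OF spec] by (simp add: openin_scott_topology)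
  ultimately show ?thesis
    unfolding d_space_def topspace_scott_topology using T0_scott_topology by blast
qed

lemma saturated_scott_topology_iff:
  "saturated (scott_topology P le) A \<longleftrightarrow> A \<subseteq> P \<and> (\<forall>x\<in>A. \<forall>y\<in>P. le x y \<longrightarrow> y \<in> A)"
proof
  assume sat: "saturated (scott_topology P le) A"
  then have "A \<subseteq> P" and A: "A = \<Inter>{U. openin (scott_topology P le) U \<and> A \<subseteq> U}"
    unfolding saturated_def topspace_scott_topology by blast+
  moreover have "y \<in> A" if "x \<in> A" "y \<in> P" "le x y" for x y
  proof -
    have "spec_le (scott_topology P le) x y"
      using that \<open>A \<subseteq> P\<close> spec_le_scott_topology by blast
    then have "y \<in> \<Inter>{U. openin (scott_topology P le) U \<and> A \<subseteq> U}"
      using openin_spec_le_upward[of _ _ x y] \<open>x \<in> A\<close> by blast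
    also have "\<dots> = A"
      by (rule A[symmetric])
    finally show "y \<in> A" .
  qed
  ultimately show "A \<subseteq> P \<and> (\<forall>x\<in>A. \<forall>y\<in>P. le x y \<longrightarrow> y \<in> A)" by blast
next
  assume up: "A \<subseteq> P \<and> (\<forall>x\<in>A. \<forall>y\<in>P. le x y \<longrightarrow> y \<in> A)"
  have "y \<in> A" if "y \<in> \<Inter>{U. openin (scott_topology P le) U \<and> A \<subseteq> U}" for y
  proof (rule ccontr)
    assume "y \<notin> A"
    have "openin (scott_topology P le) P"
      using openin_topspace[of "scott_topology P le"] by (simp add: topspace_scott_topology)
    then have "y \<in> P" using that up by blast
    then have "openin (scott_topology P le) {x \<in> P. \<not> le x y}"
      by (simp add: openin_scott_topology scott_open_not_below)
    moreover have "A \<subseteq> {x \<in> P. \<not> le x y}" using up \<open>y \<notin> A\<close> \<open>y \<in> P\<close> by blast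
    ultimately have "y \<in> {x \<in> P. \<not> le x y}" using that by blast
    then show False using refl_le by blast
  qed
  then have "\<Inter>{U. openin (scott_topology P le) U \<and> A \<subseteq> U} \<subseteq> A" by blast
  then show "saturated (scott_topology P le) A"
    unfolding saturated_def topspace_scott_topology using up by (intro conjI equalityI) auto
qed

lemma upclosure_scott_topology:
  "upclosure (scott_topology P le) F = {x \<in> P. \<exists>f\<in>F \<inter> P. le f x}"
  unfolding upclosure_def topspace_scott_topology spec_le_scott_topology by blast

end

lemma Jle_iff [simp]: "Jle (j, k) (m, n) \<longleftrightarrow> j = m \<and> k \<le> n \<or> n = \<infinity> \<and> k \<le> enat m"
  by (simp add: Jle_def)

interpretation J: poset_on UNIV Jle
proof
  fix x y z :: "nat \<times> enat"
  show "Jle x x" by (cases x) simp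
  show "Jle x y \<Longrightarrow> Jle y z \<Longrightarrow> Jle x z"
    by (cases x; cases y; cases z) auto
  show "Jle x y \<Longrightarrow> Jle y x \<Longrightarrow> x = y"
    by (cases x; cases y) auto
qed

abbreviation scott_J :: "(nat \<times> enat) topology" where
  "scott_J \<equiv> scott_topology UNIV Jle"

lemma Jle_top_iff: "Jle (p, \<infinity>) z \<longleftrightarrow> z = (p, \<infinity>)"
  by (cases z) auto

lemma Jle_enat_iff: "Jle x (m, enat n) \<longleftrightarrow> fst x = m \<and> snd x \<le> enat n"
  by (cases x) auto

lemma directed_column:
  assumes D: "directed_in UNIV Jle D" and fin: "\<forall>x\<in>D. snd x \<noteq> \<infinity>"
  obtains j S where "D = (\<lambda>k. (j, enat k)) ` S"
proof -
  obtain x0 where "x0 \<in> D" using D unfolding directed_in_def by blast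
  have "fst x = fst x0" if "x \<in> D" for x
  proof -
    obtain z where "z \<in> D" "Jle x z" "Jle x0 z"
      using D \<open>x \<in> D\<close> \<open>x0 \<in> D\<close> unfolding directed_in_def by blast
    moreover obtain m n where "z = (m, enat n)"
      using fin \<open>z \<in> D\<close> by (metis enat.exhaust prod.collapse)
    ultimately show ?thesis by (simp add: Jle_enat_iff)
  qed
  then have "D = (\<lambda>k. (fst x0, enat k)) ` {k. (fst x0, enat k) \<in> D}"
    using fin by (auto simp: image_iff)
  then show ?thesis by (rule that)
qed

lemma is_lub_column:
  assumes "infinite S"
  shows "is_lub_in UNIV Jle ((\<lambda>k. (j, enat k)) ` S) (j, \<infinity>)"
  unfolding is_lub_in_def
proof (intro conjI ballI impI)
  show "Jle x (j, \<infinity>)" if "x \<in> (\<lambda>k. (j, enat k)) ` S" for x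
    using that by auto
  fix u :: "nat \<times> enat" assume ub: "\<forall>x\<in>(\<lambda>k. (j, enat k)) ` S. Jle x u"
  obtain q n where u: "u = (q, n)" by (cases u)
  have above: "\<exists>k\<in>S. N < k" for N
    using assms infinite_nat_iff_unbounded by blast
  have "n = \<infinity>"
  proof (rule ccontr)
    assume "n \<noteq> \<infinity>"
    then obtain m where "n = enat m" by (cases n) auto
    moreover obtain k where "k \<in> S" "q + m < k" using above by blast
    ultimately show False using ub u by force
  qed
  moreover obtain k where "k \<in> S" "q < k" using above by blast
  ultimately have "q = j" using ub u by force
  with \<open>n = \<infinity>\<close> show "Jle (j, \<infinity>) u" using u by simp
qed simp

lemma dcpo_Jle: "dcpo_in UNIV Jle"
  unfolding dcpo_in_def
proof (intro allI impI)
  fix D assume D: "directed_in UNIV Jle D"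
  show "\<exists>s. is_lub_in UNIV Jle D s"
  proof (cases "\<exists>p. (p, \<infinity>) \<in> D")
    case True
    then obtain p where p: "(p, \<infinity>) \<in> D" by blast
    have "Jle x (p, \<infinity>)" if "x \<in> D" for x
    proof -
      obtain z where "z \<in> D" "Jle (p, \<infinity>) z" "Jle x z"
        using D p \<open>x \<in> D\<close> unfolding directed_in_def by blast
      then show ?thesis by (simp add: Jle_top_iff)
    qed
    then show ?thesis using p by (blast intro: is_lub_in_greatest)
  next
    case False
    then have "\<forall>x\<in>D. snd x \<noteq> \<infinity>" by (metis prod.collapse)
    with D obtain j S where DS: "D = (\<lambda>k. (j, enat k)) ` S" by (rule directed_column)
    show ?thesis
    proof (cases "finite S")
      case True
      have "S \<noteq> {}" using D DS unfolding directed_in_def by blast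
      then have "(j, enat (Max S)) \<in> D" "\<forall>x\<in>D. Jle x (j, enat (Max S))"
        using DS Max_in[OF True] Max_ge[OF True] by auto
      then show ?thesis by (blast intro: is_lub_in_greatest)
    next
      case False
      then show ?thesis using DS is_lub_column by blast
    qed
  qed
qed

lemma scott_open_above_graph: "scott_open UNIV Jle {x. enat (f (fst x)) \<le> snd x}"
  unfolding scott_open_def
proof (intro conjI allI impI ballI)
  fix x y :: "nat \<times> enat" assume "x \<in> {x. enat (f (fst x)) \<le> snd x}" "Jle x y"
  then show "y \<in> {x. enat (f (fst x)) \<le> snd x}"
    by (cases x; cases y) auto
next
  fix D s assume Ds: "directed_in UNIV Jle D \<and> is_lub_in UNIV Jle D s \<and> s \<in> {x. enat (f (fst x)) \<le> snd x}"
  show "D \<inter> {x. enat (f (fst x)) \<le> snd x} \<noteq> {}"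
  proof
    assume "D \<inter> {x. enat (f (fst x)) \<le> snd x} = {}"
    then have below: "\<forall>x\<in>D. snd x < enat (f (fst x))" by auto
    then have "\<forall>x\<in>D. snd x \<noteq> \<infinity>" using not_infinity_eq by fastforce
    with Ds obtain j S where DS: "D = (\<lambda>k. (j, enat k)) ` S" using directed_column by blast
    have "\<forall>x\<in>D. Jle x (j, enat (f j - 1))"
      using below DS by auto
    then have "Jle s (j, enat (f j - 1))"
      using Ds unfolding is_lub_in_def by blast
    then obtain b where s: "s = (j, b)" "b \<le> enat (f j - 1)"
      by (cases s) (simp add: Jle_enat_iff)
    moreover have "enat (f j) \<le> b" using Ds s by simp
    ultimately have le: "enat (f j) \<le> enat (f j - 1)" by (metis order.trans)
    have "D \<noteq> {}" using Ds unfolding directed_in_def by blast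
    then have "0 < f j" using below DS by auto
    with le show False by simp
  qed
qed auto

lemma openin_scott_J_meets_column:
  assumes "openin scott_J U" "(q, \<infinity>) \<in> U"
  obtains g where "(q, enat g) \<in> U"
proof -
  let ?D = "range (\<lambda>k. (q, enat k))"
  have "directed_in UNIV Jle ?D"
    unfolding directed_in_def
  proof (intro conjI ballI)
    fix x y assume "x \<in> ?D" "y \<in> ?D"
    then obtain a b where "x = (q, enat a)" "y = (q, enat b)" by blast
    then show "\<exists>z\<in>?D. Jle x z \<and> Jle y z"
      by (intro bexI[of _ "(q, enat (max a b))"]) auto
  qed auto
  moreover have "is_lub_in UNIV Jle ?D (q, \<infinity>)"
    using is_lub_column[of UNIV q] by simp
  ultimately have "?D \<inter> U \<noteq> {}"
    using assms unfolding openin_scott_topology scott_open_def by blast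
  then show ?thesis using that by blast
qed

definition lowest_level :: "(nat \<times> enat) set \<Rightarrow> nat \<Rightarrow> nat" where
  "lowest_level A j = (LEAST k. (j, enat k) \<in> A)"

lemma lowest_level_in: "(j, enat k) \<in> A \<Longrightarrow> (j, enat (lowest_level A j)) \<in> A"
  unfolding lowest_level_def by (rule LeastI)

lemma lowest_level_le: "(j, enat k) \<in> A \<Longrightarrow> lowest_level A j \<le> k"
  unfolding lowest_level_def by (rule Least_le)

lemma compactin_finite_columns:
  assumes "compactin scott_J A"
  shows "finite {j. \<exists>k. (j, enat k) \<in> A}"
proof (rule ccontr)
  define C where "C = {j. \<exists>k. (j, enat k) \<in> A}"
  let ?h = "lowest_level A"
  assume "infinite {j. \<exists>k. (j, enat k) \<in> A}"
  then have "infinite C" by (simp add: C_def)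
  \<comment> \<open>\<open>V m\<close> asks for the lowest level of column \<open>j\<close> when \<open>j \<le> m\<close> and for one level more beyond \<open>m\<close>,
    so finitely many \<open>V m\<close> miss the lowest points of the columns beyond all their indices.\<close>
  define V where "V m = {x. enat (if fst x \<le> m then ?h (fst x) else Suc (?h (fst x))) \<le> snd x}" for m
  have "openin scott_J (V m)" for m
    using scott_open_above_graph[of "\<lambda>j. if j \<le> m then ?h j else Suc (?h j)"]
    by (simp add: openin_scott_topology V_def)
  moreover have "A \<subseteq> \<Union>(range V)"
  proof
    fix z assume "z \<in> A"
    obtain j l where z: "z = (j, l)" by (cases z)
    show "z \<in> \<Union>(range V)"
    proof (cases l)
      case (enat k)
      then have "z \<in> V j" using lowest_level_le \<open>z \<in> A\<close> z by (simp add: V_def)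
      then show ?thesis by blast
    next
      case infinity
      then have "z \<in> V 0" using z by (simp add: V_def)
      then show ?thesis by blast
    qed
  qed
  ultimately obtain \<F> where \<F>: "finite \<F>" "\<F> \<subseteq> range V" "A \<subseteq> \<Union>\<F>"
    using assms[unfolded compactin_def, THEN conjunct2, rule_format, of "range V"] by blast
  then obtain M where M: "finite M" "\<F> = V ` M"
    by (meson finite_subset_image)
  then obtain N where N: "\<forall>m\<in>M. m \<le> N"
    using finite_nat_set_iff_bounded_le by blast
  obtain j where "j \<in> C" "N < j"
    using \<open>infinite C\<close> infinite_nat_iff_unbounded by blast
  then obtain m where "m \<in> M" "(j, enat (?h j)) \<in> V m"
    using lowest_level_in \<F>(3) M(2) unfolding C_def by blast
  moreover have "\<not> j \<le> m" using N \<open>m \<in> M\<close> \<open>N < j\<close> by force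
  ultimately show False by (simp add: V_def)
qed

lemma scott_J_tops_finitely_covered:
  assumes "openin scott_J U" "\<forall>p\<in>T. (p, \<infinity>) \<in> U"
  obtains G where "finite G" "G \<subseteq> U" "\<forall>p\<in>T. \<exists>f\<in>G. Jle f (p, \<infinity>)"
proof (cases "T = {}")
  case True
  then show ?thesis using that[of "{}"] by simp
next
  case False
  then obtain p0 where "p0 \<in> T" by blast
  with assms obtain g where g: "(p0, enat g) \<in> U"
    using openin_scott_J_meets_column by blast
  show ?thesis
  proof (rule that[of "insert (p0, enat g) ((\<lambda>p. (p, \<infinity>)) ` {p \<in> T. p < g})"])
    show "\<forall>p\<in>T. \<exists>f\<in>insert (p0, enat g) ((\<lambda>p. (p, \<infinity>)) ` {p \<in> T. p < g}). Jle f (p, \<infinity>)"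
    proof
      fix p assume "p \<in> T"
      show "\<exists>f\<in>insert (p0, enat g) ((\<lambda>p. (p, \<infinity>)) ` {p \<in> T. p < g}). Jle f (p, \<infinity>)"
      proof (cases "p < g")
        case True
        then show ?thesis using \<open>p \<in> T\<close> J.refl_le by blast
      next
        case False
        then show ?thesis by simp
      qed
    qed
  qed (use g assms in auto)
qed

lemma strongly_compact_scott_J:
  assumes "finite {j. \<exists>k. (j, enat k) \<in> A}"
  shows "strongly_compact scott_J A"
  unfolding strongly_compact_def topspace_scott_topology
proof (intro conjI allI impI)
  fix U assume U: "openin scott_J U \<and> A \<subseteq> U"
  define C where "C = {j. \<exists>k. (j, enat k) \<in> A}"
  let ?h = "lowest_level A"
  have "\<forall>p\<in>{p. (p, \<infinity>) \<in> A}. (p, \<infinity>) \<in> U" using U by blast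
  then obtain G where G: "finite G" "G \<subseteq> U" "\<forall>p\<in>{p. (p, \<infinity>) \<in> A}. \<exists>f\<in>G. Jle f (p, \<infinity>)"
    using U by (metis scott_J_tops_finitely_covered)
  define F where "F = (\<lambda>j. (j, enat (?h j))) ` C \<union> G"
  have "finite F" using assms G(1) by (simp add: F_def C_def)
  moreover have "F \<subseteq> U" using lowest_level_in U G(2) by (auto simp: F_def C_def)
  moreover have "A \<subseteq> upclosure scott_J F"
  proof
    fix z assume "z \<in> A"
    obtain j l where z: "z = (j, l)" by (cases z)
    have "\<exists>f\<in>F. Jle f z"
    proof (cases l)
      case (enat k)
      then have "j \<in> C" "?h j \<le> k" using \<open>z \<in> A\<close> z lowest_level_le by (auto simp: C_def)
      then have "(j, enat (?h j)) \<in> F" "Jle (j, enat (?h j)) z"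
        using z enat by (auto simp: F_def)
      then show ?thesis by blast
    next
      case infinity
      then have "\<exists>f\<in>G. Jle f z" using \<open>z \<in> A\<close> z G(3) by blast
      then show ?thesis by (auto simp: F_def)
    qed
    then show "z \<in> upclosure scott_J F" by (simp add: J.upclosure_scott_topology)
  qed
  moreover have "upclosure scott_J F \<subseteq> U"
    using upclosure_subset_openin U \<open>F \<subseteq> U\<close> by blast
  ultimately show "\<exists>F. finite F \<and> F \<subseteq> UNIV \<and> A \<subseteq> upclosure scott_J F \<and> upclosure scott_J F \<subseteq> U"
    by blast
qed simp

lemma Qset_subset_Qs_set_scott_J: "Qset scott_J \<subseteq> Qs_set scott_J"
  unfolding Qset_def Qs_set_def
  using compactin_finite_columns strongly_compact_scott_J by blast

definition tops_from :: "nat \<Rightarrow> (nat \<times> enat) set" where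
  "tops_from n = {(p, \<infinity>) | p. n \<le> p}"

lemma tops_from_in_Qs_set: "tops_from n \<in> Qs_set scott_J"
proof -
  have "(n, \<infinity>) \<in> tops_from n" by (simp add: tops_from_def)
  moreover have "strongly_compact scott_J (tops_from n)"
    by (rule strongly_compact_scott_J) (simp add: tops_from_def)
  moreover have "saturated scott_J (tops_from n)"
    unfolding J.saturated_scott_topology_iff tops_from_def by (auto simp: Jle_top_iff)
  ultimately show ?thesis unfolding Qs_set_def by blast
qed

lemma filtered_family_tops_from: "filtered_family (range tops_from)"
  unfolding filtered_family_def
proof (intro conjI ballI)
  fix A B assume "A \<in> range tops_from" "B \<in> range tops_from"
  then obtain a b where "A = tops_from a" "B = tops_from b" by blast
  then have "tops_from (max a b) \<subseteq> A \<inter> B" by (auto simp: tops_from_def)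
  then show "\<exists>C\<in>range tops_from. C \<subseteq> A \<inter> B" by blast
qed simp

lemma Inter_tops_from: "\<Inter>(range tops_from) = {}"
proof -
  have "x \<notin> tops_from (Suc (fst x))" for x by (auto simp: tops_from_def)
  then show ?thesis by blast
qed

theorem mainTheorem3:
  shows "d_space (scott_topology UNIV Jle) \<and>
         Qset (scott_topology UNIV Jle) = Qs_set (scott_topology UNIV Jle) \<and>
         \<not> well_filtered (scott_topology UNIV Jle) \<and>
         \<not> s_well_filtered (scott_topology UNIV Jle)"
proof -
  have "\<not> s_well_filtered scott_J"
    using s_well_filtered_Inter_nonempty[of scott_J "range tops_from"]
      tops_from_in_Qs_set filtered_family_tops_from Inter_tops_from by blast
  then show ?thesis
    using J.d_space_scott_topology[OF dcpo_Jle] Qs_set_subset_Qset Qset_subset_Qs_set_scott_J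
      well_filtered_imp_s_well_filtered by blast
qed
end
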